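(* Let $a,b>0$ with $ab\geqslant \frac14 e^2$ and set $c:=\frac{e}{e-1}$. Then $$x\geqslant \left(2^{\log 16}(ab)^{\log(16ab)}\right)^{c^2a}\ \Longrightarrow\ \log x\geqslant a\left(\log(b\log x)\right)^2.$$ *)

theory Defs
  imports "HOL-Analysis.Analysis"
begin

end

theory Submission
  imports Defs
begin

(* With s = ln (4ab) the bound on x reads ln x \<ge> a (c s)^2, because
   2 powr ln 16 * (ab) powr ln (16ab) = exp ((ln 4 + ln (ab))^2).  Writing ln x = a u^2 with
   u \<ge> c s, the claim becomes ln (b ln x) = s - ln 4 + 2 ln u \<le> u.  The function u - 2 ln u
   is increasing for u \<ge> 2, and at u = c s the tangent bound ln y \<le> y / e gives
   c s - 2 ln (c s) \<ge> c s (1 - 1/e) - ln 4 = s - ln 4, since c (1 - 1/e) = 1. *)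

lemma ln_le_divide_exp1:
  fixes y :: real
  assumes "y > 0"
  shows "ln y \<le> y / exp 1"
proof -
  have "ln (y / exp 1) \<le> y / exp 1 - 1"
    using assms by (intro ln_le_minus_one) simp
  then show ?thesis
    using assms by (simp add: ln_div)
qed

lemma sub_two_ln_mono:
  fixes u v :: real
  assumes "2 \<le> v" and "v \<le> u"
  shows "v - 2 * ln v \<le> u - 2 * ln u"
proof -
  have "ln u - ln v = ln (u / v)"
    using assms by (simp add: ln_div)
  also have "\<dots> \<le> (u - v) / v"
    using ln_le_minus_one[of "u / v"] assms by (simp add: diff_divide_distrib)
  also have "\<dots> \<le> (u - v) / 2"
    using assms by (intro divide_left_mono) auto
  finally show ?thesis
    by simp
qed

lemma sub_two_ln_scaled_ge:
  fixes s :: real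
  assumes "s > 0"
  shows "s - ln 4 \<le> exp 1 / (exp 1 - 1) * s - 2 * ln (exp 1 / (exp 1 - 1) * s)"
proof -
  define c where "c = exp 1 / (exp 1 - 1 :: real)"
  have "exp 1 > (1 :: real)"
    by simp
  then have c_pos: "c > 0" and c_eq: "c - c / exp 1 = 1"
    unfolding c_def by (simp_all add: divide_simps)
  have ln4: "ln (4 :: real) = 2 * ln 2"
    using ln_realpow[of 2 2] by simp
  have "ln (c * s) = ln 2 + ln (c * s / 2)"
    using c_pos assms by (simp add: ln_div)
  also have "\<dots> \<le> ln 2 + c * s / 2 / exp 1"
    using ln_le_divide_exp1[of "c * s / 2"] c_pos assms by simp
  finally have "2 * ln (c * s) \<le> ln 4 + c * s / exp 1"
    by (simp add: ln4 field_simps)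
  moreover have "c * s - c * s / exp 1 = s"
    using c_eq by (metis left_diff_distrib mult.commute mult_1 times_divide_eq_left)
  ultimately show ?thesis
    unfolding c_def by linarith
qed

lemma exp_square_ln_four_mult:
  fixes p :: real
  assumes "p > 0"
  shows "2 powr ln 16 * p powr ln (16 * p) = exp ((ln (4 * p))\<^sup>2)"
proof -
  have ln16: "ln (16 :: real) = 4 * ln 2" and ln4: "ln (4 :: real) = 2 * ln 2"
    using ln_realpow[of 2 4] ln_realpow[of 2 2] by simp_all
  have "2 powr ln 16 * p powr ln (16 * p) = exp (ln 16 * ln 2 + ln (16 * p) * ln p)"
    using assms by (simp add: powr_def exp_add)
  also have "ln 16 * ln 2 + ln (16 * p) * ln p = (ln (4 * p))\<^sup>2"
    using assms by (simp add: ln_mult ln16 ln4 power2_eq_square algebra_simps)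
  finally show ?thesis .
qed

lemma square_ln_mult_le:
  fixes a b L :: real
  assumes "a > 0" and "b > 0" and "a * b \<ge> exp 1 ^ 2 / 4"
    and "L \<ge> a * (exp 1 / (exp 1 - 1) * ln (4 * a * b))\<^sup>2"
  shows "a * (ln (b * L))\<^sup>2 \<le> L"
proof -
  define s where "s = ln (4 * a * b)"
  define u where "u = sqrt (L / a)"
  define c where "c = exp 1 / (exp 1 - 1 :: real)"
  have "exp 2 \<le> 4 * a * b"
    using assms(3) by (simp add: power2_eq_square flip: exp_add)
  then have s_ge: "s \<ge> 2"
    unfolding s_def using assms(1,2) by (simp add: ln_ge_iff)
  have "c \<ge> 1"
    unfolding c_def by (simp add: field_simps)
  then have cs_ge: "c * s \<ge> 2"
    using s_ge mult_mono[of 1 c 2 s] by simp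
  have "(c * s)\<^sup>2 \<le> L / a"
    using assms(1,4) unfolding c_def s_def by (simp add: field_simps)
  then have u_ge: "c * s \<le> u"
    unfolding u_def using cs_ge by (simp add: real_le_rsqrt)
  have L_eq: "L = a * u\<^sup>2"
    unfolding u_def using assms(1) \<open>(c * s)\<^sup>2 \<le> L / a\<close>
    by (simp add: order_trans[OF zero_le_power2])
  have ln_bL: "ln (b * L) = s - ln 4 + 2 * ln u"
    using assms(1,2) cs_ge u_ge unfolding L_eq s_def
    by (simp add: ln_mult ln_realpow algebra_simps)
  have "ln 4 \<le> 2 * ln u"
    using cs_ge u_ge ln_realpow[of 2 2] by simp
  then have "0 \<le> ln (b * L)"
    using ln_bL s_ge by simp
  moreover have "ln (b * L) \<le> u"
    using ln_bL sub_two_ln_scaled_ge[of s] sub_two_ln_mono[OF cs_ge u_ge] s_ge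
    unfolding c_def by simp
  ultimately have "(ln (b * L))\<^sup>2 \<le> u\<^sup>2"
    by (simp add: power_mono)
  then show ?thesis
    using assms(1) L_eq by simp
qed

theorem lemma1:
  fixes a b x c :: real
  assumes "a > 0" and "b > 0"
    and "a * b \<ge> exp 1 ^ 2 / 4"
    and "c = exp 1 / (exp 1 - 1)"
    and "x \<ge> (2 powr (ln 16) * (a * b) powr (ln (16 * a * b))) powr (c ^ 2 * a)"
  shows "ln x \<ge> a * (ln (b * ln x)) ^ 2"
proof -
  have "(2 powr (ln 16) * (a * b) powr (ln (16 * a * b))) powr (c ^ 2 * a)
      = exp (a * (c * ln (4 * a * b))\<^sup>2)"
    using exp_square_ln_four_mult[of "a * b"] assms(1,2)
    by (simp add: mult.assoc exp_powr_real power_mult_distrib algebra_simps)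
  then have "ln x \<ge> a * (c * ln (4 * a * b))\<^sup>2"
    using assms(5) by (metis exp_gt_zero less_le_trans ln_ge_iff)
  then show ?thesis
    using square_ln_mult_le assms(1-4) by blast
qed

end
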